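(* Fix a prime power $q$ and an integer $r\ge 0$. Then the limit $p_r(q)=\lim_{n\to\infty} p_r(q,n)$, with $n$ ranging over integers of the same parity as $r$, exists and satisfies $0<p_r(q)<1$. Furthermore, for even $r\ge 2$, $$\frac{p_r(q)}{p_0(q)}=\frac{q^{r/2}}{\prod_{j=1}^r(q^j-1)},\qquad p_0(q)=\frac{1}{1+S},\quad S=\sum_{k=1}^\infty \frac{q^{k}}{\prod_{j=1}^{2k}(q^j-1)},$$ and for odd $r\ge 3$, $$\frac{p_r(q)}{p_1(q)}=\frac{(q-1)q^{(r-1)/2}}{\prod_{j=1}^r(q^j-1)},\qquad p_1(q)=\frac{1}{1+S'},\quad S'=(q-1)\sum_{k=1}^\infty \frac{q^{k}}{\prod_{j=1}^{2k+1}(q^j-1)}.$$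
   Context: Let ${\mathbb F}_q$ be the finite field of order $q$ and $V={\mathbb F}_q^n$. A differential on $V$ is a linear map $D\colon V\to V$ with $D^2=0$; its homology is $\ker D/\operatorname{im} D$, whose dimension $r$ necessarily has the same parity as $n$. Let $c(q,n)$ be the number of differentials on ${\mathbb F}_q^n$, and $c_r(q,n)$ the number of differentials whose homology has dimension $r$. Define $p_r(q,n)=c_r(q,n)/c(q,n)$ (the probability with respect to the uniform distribution on differentials). *)

theory Defs
  imports "HOL-Analysis.Analysis" "Jordan_Normal_Form.DL_Rank" "Jordan_Normal_Form.Matrix_Kernel"
begin

definition differentials :: "nat \<Rightarrow> ('a::{finite,field}) mat set" where
  "differentials n = {D \<in> carrier_mat n n. D * D = 0\<^sub>m n n}"

text \<open>Dimension of the homology ker D / im D, i.e. dim ker D - dim im D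
  (im D = column space, whose dimension is the rank).\<close>
definition homology_dim :: "nat \<Rightarrow> ('a::{finite,field}) mat \<Rightarrow> nat" where
  "homology_dim n D = kernel_dim D - vec_space.rank n D"

definition c_count :: "'a::{finite,field} itself \<Rightarrow> nat \<Rightarrow> nat" where
  "c_count T n = card (differentials n :: 'a mat set)"

definition c_r_count :: "'a::{finite,field} itself \<Rightarrow> nat \<Rightarrow> nat \<Rightarrow> nat" where
  "c_r_count T r n = card {D \<in> (differentials n :: 'a mat set). homology_dim n D = r}"

definition p_prob :: "'a::{finite,field} itself \<Rightarrow> nat \<Rightarrow> nat \<Rightarrow> real" where
  "p_prob T r n = real (c_r_count T r n) / real (c_count T n)"

end

theory Submission
  imports Defs
begin

text \<open>A differential D of rank k on F_q^n factors as D = B C with C : F^n -> F^k onto,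
  B : F^k -> F^n injective and C B = 0, and D has exactly |GL_k(F_q)| such factorisations.
  Counting the pairs (C, B) gives c_r(q, r + 2k) = q^(k(k-1)/2) [r+2k]! / ([r]! [k]!), where
  [m]! = (q - 1)(q^2 - 1)...(q^m - 1). For n = e + 2M with e in {0, 1}, dividing by the count of
  rank M turns the count of homology dimension e + 2s into the weight
  beta_e(s) * prod_{i<s} (1 - q^(i - M)) with beta_e(s) = q^s [e]! / [e+2s]!. As M grows these
  weights tend to beta_e(s) and are dominated by the summable beta_e, so by Tannery's theorem
  p_{e+2s}(q) = beta_e(s) / sum_t beta_e(t).\<close>

unbundle no vec_syntax

section \<open>Ranges of matrices over finite fields\<close>

definition mat_range :: "'a::field mat \<Rightarrow> 'a vec set" where
  "mat_range A = (\<lambda>x. A *\<^sub>v x) ` carrier_vec (dim_col A)"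

definition vec_subspace :: "nat \<Rightarrow> 'a::field vec set \<Rightarrow> bool" where
  "vec_subspace n W \<longleftrightarrow> W \<subseteq> carrier_vec n \<and> 0\<^sub>v n \<in> W \<and> (\<forall>x\<in>W. \<forall>y\<in>W. x + y \<in> W)
     \<and> (\<forall>a. \<forall>x\<in>W. a \<cdot>\<^sub>v x \<in> W)"

definition mat_inj :: "'a::field mat \<Rightarrow> bool" where
  "mat_inj B \<longleftrightarrow> inj_on (\<lambda>x. B *\<^sub>v x) (carrier_vec (dim_col B))"

definition append_col :: "'a mat \<Rightarrow> 'a vec \<Rightarrow> 'a mat" where
  "append_col B w = mat (dim_row B) (Suc (dim_col B)) (\<lambda>(i,j). if j < dim_col B then B $$ (i,j) else w $ i)"

definition drop_last_col :: "'a mat \<Rightarrow> 'a mat" where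
  "drop_last_col M = mat (dim_row M) (dim_col M - 1) (\<lambda>(i,j). M $$ (i,j))"

lemma card_field_ge_2: "CARD('a::{finite,field}) \<ge> 2"
proof -
  have "card {0::'a, 1} \<le> CARD('a)" by (intro card_mono) simp_all
  thus ?thesis by simp
qed

lemma card_pow_eq_iff: "CARD('a::{finite,field}) ^ a = CARD('a) ^ b \<longleftrightarrow> a = b"
  using card_field_ge_2[where 'a='a] by (simp add: power_inject_exp)

lemma card_pow_le_iff: "CARD('a::{finite,field}) ^ a \<le> CARD('a) ^ b \<longleftrightarrow> a \<le> b"
  using card_field_ge_2[where 'a='a] by (simp add: power_increasing_iff)

lemma card_carrier_vec: "card (carrier_vec n :: 'a::finite vec set) = CARD('a) ^ n"
proof -
  have "bij_betw list_of_vec (carrier_vec n :: 'a vec set) {xs. set xs \<subseteq> UNIV \<and> length xs = n}"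
    by (intro bij_betwI[of _ _ _ vec_of_list]) (auto simp: vec_list list_vec intro: carrier_vecI)
  hence "card (carrier_vec n :: 'a vec set) = card {xs :: 'a list. set xs \<subseteq> UNIV \<and> length xs = n}"
    by (rule bij_betw_same_card)
  thus ?thesis by (simp only: card_lists_length_eq[OF finite])
qed

lemma finite_carrier_vec[simp]: "finite (carrier_vec n :: 'a::finite vec set)"
  by (rule card_ge_0_finite) (simp add: card_carrier_vec)

lemma finite_carrier_mat[simp]: "finite (carrier_mat n k :: 'a::finite mat set)"
proof -
  have "A \<in> mat_of_rows k ` {xs. set xs \<subseteq> carrier_vec k \<and> length xs = n}"
    if "A \<in> carrier_mat n k" for A :: "'a mat"
    using that rows_carrier[of A] mat_of_rows_rows[of A] by (intro image_eqI[of _ _ "rows A"]) auto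
  moreover have "finite {xs. set xs \<subseteq> (carrier_vec k :: 'a vec set) \<and> length xs = n}"
    by (rule finite_lists_length_eq) simp
  ultimately show ?thesis by (meson finite_imageI finite_subset subsetI)
qed

lemma mat_range_carrier: "A \<in> carrier_mat n k \<Longrightarrow> mat_range A \<subseteq> carrier_vec n"
  unfolding mat_range_def by auto

lemma finite_mat_range[simp]: "finite (mat_range (A :: 'a::{finite,field} mat))"
  unfolding mat_range_def by simp

lemma card_mat_range_le_cols: "card (mat_range (A :: 'a::{finite,field} mat)) \<le> CARD('a) ^ dim_col A"
  unfolding mat_range_def by (metis card_carrier_vec card_image_le finite_carrier_vec)

lemma card_mat_range_le_rows:
  "A \<in> carrier_mat n k \<Longrightarrow> card (mat_range (A :: 'a::{finite,field} mat)) \<le> CARD('a) ^ n"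
  using mat_range_carrier[of A n k] by (metis card_carrier_vec card_mono finite_carrier_vec)

lemma mat_inj_iff_card:
  "mat_inj (B :: 'a::{finite,field} mat) \<longleftrightarrow> card (mat_range B) = CARD('a) ^ dim_col B"
  unfolding mat_inj_def mat_range_def by (simp add: inj_on_iff_eq_card card_carrier_vec)

lemma mat_range_zero_cols: "mat_range (0\<^sub>m n 0 :: 'a::field mat) = {0\<^sub>v n}"
  unfolding mat_range_def by (auto simp: scalar_prod_def intro!: eq_vecI image_eqI[of _ _ "0\<^sub>v 0"])

lemma mat_range_mult: "B \<in> carrier_mat m r \<Longrightarrow> C \<in> carrier_mat r n \<Longrightarrow>
  mat_range (B * C) = (\<lambda>x. B *\<^sub>v x) ` mat_range (C :: 'a::field mat)"
  unfolding mat_range_def by (auto simp: assoc_mult_mat_vec image_image)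

lemma mat_range_mult_subset:
  "B \<in> carrier_mat m r \<Longrightarrow> C \<in> carrier_mat r n \<Longrightarrow> mat_range (B * C) \<subseteq> mat_range (B :: 'a::field mat)"
  unfolding mat_range_mult mat_range_def by auto

lemma vec_subspace_carrier_vec: "vec_subspace n (carrier_vec n :: 'a::field vec set)"
  unfolding vec_subspace_def by auto

lemma card_vec_subspace_le:
  "vec_subspace n (W :: 'a::{finite,field} vec set) \<Longrightarrow> card W \<le> CARD('a) ^ n"
  unfolding vec_subspace_def by (metis card_carrier_vec card_mono finite_carrier_vec)

lemma vec_subspace_mat_range:
  assumes A: "A \<in> carrier_mat n k"
  shows "vec_subspace n (mat_range A)"
  unfolding vec_subspace_def
proof (intro conjI ballI allI)
  show "mat_range A \<subseteq> carrier_vec n" using mat_range_carrier[OF A] .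
  show "0\<^sub>v n \<in> mat_range A"
    using A unfolding mat_range_def by (intro image_eqI[of _ _ "0\<^sub>v k"]) auto
  fix x y assume "x \<in> mat_range A" "y \<in> mat_range A"
  then obtain u v where "u \<in> carrier_vec k" "v \<in> carrier_vec k" "x = A *\<^sub>v u" "y = A *\<^sub>v v"
    using A unfolding mat_range_def by auto
  thus "x + y \<in> mat_range A"
    using A unfolding mat_range_def by (intro image_eqI[of _ _ "u + v"]) (auto simp: mult_add_distrib_mat_vec)
next
  fix a x assume "x \<in> mat_range A"
  then obtain u where "u \<in> carrier_vec k" "x = A *\<^sub>v u" using A unfolding mat_range_def by auto
  thus "a \<cdot>\<^sub>v x \<in> mat_range A"
    using A unfolding mat_range_def by (intro image_eqI[of _ _ "a \<cdot>\<^sub>v u"]) (auto simp: mult_mat_vec)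
qed

lemma vec_subspace_mat_kernel:
  assumes C: "C \<in> carrier_mat k n"
  shows "vec_subspace n (mat_kernel (C :: 'a::field mat))"
  unfolding vec_subspace_def
proof (intro conjI ballI allI)
  show "mat_kernel C \<subseteq> carrier_vec n" using mat_kernel_carrier[OF C] .
  show "0\<^sub>v n \<in> mat_kernel C" using C by (auto intro!: mat_kernelI eq_vecI)
  fix x y assume "x \<in> mat_kernel C" "y \<in> mat_kernel C"
  thus "x + y \<in> mat_kernel C"
    using C by (auto simp: mat_kernel_def mult_add_distrib_mat_vec)
next
  fix a x assume "x \<in> mat_kernel C"
  thus "a \<cdot>\<^sub>v x \<in> mat_kernel C" using mat_kernel_smult[OF C] by blast
qed

lemma add_line_eq_self:
  assumes W: "vec_subspace n W" and w: "w \<in> W"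
  shows "{y + t \<cdot>\<^sub>v w | y t. y \<in> W} = W"
proof (intro equalityI subsetI)
  fix z assume "z \<in> {y + t \<cdot>\<^sub>v w | y t. y \<in> W}"
  thus "z \<in> W" using W w unfolding vec_subspace_def by blast
next
  fix z assume z: "z \<in> W"
  have "z \<in> carrier_vec n" "w \<in> carrier_vec n" using W z w unfolding vec_subspace_def by auto
  hence "z = z + 0 \<cdot>\<^sub>v w" by (intro eq_vecI) auto
  thus "z \<in> {y + t \<cdot>\<^sub>v w | y t. y \<in> W}" using z by blast
qed

lemma card_add_line_notin:
  fixes W :: "'a::{finite,field} vec set"
  assumes W: "vec_subspace n W" and w: "w \<in> carrier_vec n" "w \<notin> W"
  shows "card {y + t \<cdot>\<^sub>v w | y t. y \<in> W} = CARD('a) * card W"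
proof -
  have WC: "W \<subseteq> carrier_vec n" using W unfolding vec_subspace_def by auto
  have "inj_on (\<lambda>(y,t). y + t \<cdot>\<^sub>v w) (W \<times> UNIV)"
  proof (rule inj_onI, clarify)
    fix y t y' t' assume yW: "y \<in> W" and y'W: "y' \<in> W" and e: "y + t \<cdot>\<^sub>v w = y' + t' \<cdot>\<^sub>v w"
    have yc: "y \<in> carrier_vec n" "y' \<in> carrier_vec n" using yW y'W WC by auto
    have comp: "y' $ i - y $ i = (t - t') * w $ i" if "i < n" for i
      using arg_cong[OF e, of "\<lambda>v. v $ i"] that yc w by (simp add: algebra_simps)
    show "y = y' \<and> t = t'"
    proof (cases "t = t'")
      case True
      thus ?thesis using comp yc by (auto intro!: eq_vecI)
    next
      case False
      \<comment> \<open>otherwise w = (y' - y) / (t - t') would lie in W\<close>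
      have "(1 / (t - t')) \<cdot>\<^sub>v (y' + (-1) \<cdot>\<^sub>v y) \<in> W" using W yW y'W unfolding vec_subspace_def by blast
      moreover have "(1 / (t - t')) \<cdot>\<^sub>v (y' + (-1) \<cdot>\<^sub>v y) = w"
        using comp yc w False by (intro eq_vecI) (auto simp: field_simps)
      ultimately show ?thesis using w(2) by simp
    qed
  qed
  moreover have "{y + t \<cdot>\<^sub>v w | y t. y \<in> W} = (\<lambda>(y,t). y + t \<cdot>\<^sub>v w) ` (W \<times> UNIV)" by auto
  ultimately show ?thesis by (simp add: card_image card_cartesian_product)
qed

lemma dim_append_col[simp]:
  "dim_col (append_col B w) = Suc (dim_col B)" "dim_row (append_col B w) = dim_row B"
  unfolding append_col_def by auto

lemma append_col_carrier[simp]: "B \<in> carrier_mat n k \<Longrightarrow> append_col B w \<in> carrier_mat n (Suc k)"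
  unfolding append_col_def by auto

lemma mult_append_col:
  fixes B :: "'a::field mat"
  assumes B: "B \<in> carrier_mat n k" and w: "w \<in> carrier_vec n" and x: "x \<in> carrier_vec (Suc k)"
  shows "append_col B w *\<^sub>v x = B *\<^sub>v vec k (\<lambda>i. x $ i) + x $ k \<cdot>\<^sub>v w"
proof (rule eq_vecI)
  fix i assume "i < dim_vec (B *\<^sub>v vec k (\<lambda>i. x $ i) + x $ k \<cdot>\<^sub>v w)"
  hence i: "i < n" using B w by simp
  have "(append_col B w *\<^sub>v x) $ i = (\<Sum>j<Suc k. (if j < k then B $$ (i,j) else w $ i) * x $ j)"
    using B x i unfolding append_col_def by (simp add: mult_mat_vec_def scalar_prod_def lessThan_atLeast0)
  also have "\<dots> = (\<Sum>j<k. B $$ (i,j) * x $ j) + w $ i * x $ k" by simp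
  also have "\<dots> = (B *\<^sub>v vec k (\<lambda>i. x $ i) + x $ k \<cdot>\<^sub>v w) $ i"
    using B w i by (simp add: mult_mat_vec_def scalar_prod_def lessThan_atLeast0 mult.commute)
  finally show "(append_col B w *\<^sub>v x) $ i = (B *\<^sub>v vec k (\<lambda>i. x $ i) + x $ k \<cdot>\<^sub>v w) $ i" .
qed (use B w in \<open>simp add: append_col_def\<close>)

lemma mat_range_append_col:
  fixes B :: "'a::field mat"
  assumes B: "B \<in> carrier_mat n k" and w: "w \<in> carrier_vec n"
  shows "mat_range (append_col B w) = {y + t \<cdot>\<^sub>v w | y t. y \<in> mat_range B}"
proof (intro equalityI subsetI)
  fix z assume "z \<in> mat_range (append_col B w)"
  then obtain x where x: "x \<in> carrier_vec (Suc k)" "z = append_col B w *\<^sub>v x"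
    using B unfolding mat_range_def by auto
  moreover have "B *\<^sub>v vec k (\<lambda>i. x $ i) \<in> mat_range B" using B unfolding mat_range_def by auto
  ultimately show "z \<in> {y + t \<cdot>\<^sub>v w | y t. y \<in> mat_range B}" using mult_append_col[OF B w] by blast
next
  fix z assume "z \<in> {y + t \<cdot>\<^sub>v w | y t. y \<in> mat_range B}"
  then obtain u t where u: "u \<in> carrier_vec k" "z = B *\<^sub>v u + t \<cdot>\<^sub>v w"
    using B unfolding mat_range_def by auto
  define x where "x = vec (Suc k) (\<lambda>i. if i < k then u $ i else t)"
  have x: "x \<in> carrier_vec (Suc k)" "vec k (\<lambda>i. x $ i) = u" "x $ k = t"
    using u(1) unfolding x_def by (auto intro!: eq_vecI)
  hence "append_col B w *\<^sub>v x = z" using mult_append_col[OF B w x(1)] u by simp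
  thus "z \<in> mat_range (append_col B w)" using x B unfolding mat_range_def by (auto intro!: image_eqI[of _ _ x])
qed

lemma card_mat_range_append_col:
  fixes B :: "'a::{finite,field} mat"
  assumes B: "B \<in> carrier_mat n k" and w: "w \<in> carrier_vec n"
  shows "card (mat_range (append_col B w))
    = (if w \<in> mat_range B then card (mat_range B) else CARD('a) * card (mat_range B))"
  unfolding mat_range_append_col[OF B w]
  using add_line_eq_self[OF vec_subspace_mat_range[OF B]] card_add_line_notin[OF vec_subspace_mat_range[OF B] w]
  by simp

lemma mat_inj_append_col:
  fixes B :: "'a::{finite,field} mat"
  assumes B: "B \<in> carrier_mat n k" and w: "w \<in> carrier_vec n"
  shows "mat_inj (append_col B w) \<longleftrightarrow> mat_inj B \<and> w \<notin> mat_range B"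
proof -
  have "card (mat_range B) \<le> CARD('a) ^ k" using card_mat_range_le_cols[of B] B by simp
  moreover have "CARD('a) ^ k < CARD('a) ^ Suc k"
    using card_field_ge_2[where 'a='a] by (intro power_strict_increasing) auto
  ultimately show ?thesis
    using B card_mat_range_append_col[OF B w] card_field_ge_2[where 'a='a]
    unfolding mat_inj_iff_card by auto
qed

lemma mat_range_append_col_subset:
  fixes B :: "'a::field mat"
  assumes W: "vec_subspace n W" and B: "B \<in> carrier_mat n k" and w: "w \<in> carrier_vec n"
  shows "mat_range (append_col B w) \<subseteq> W \<longleftrightarrow> mat_range B \<subseteq> W \<and> w \<in> W"
proof
  assume H: "mat_range (append_col B w) \<subseteq> W"
  have "y = y + 0 \<cdot>\<^sub>v w" if "y \<in> mat_range B" for y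
    using that mat_range_carrier[OF B] w by (intro eq_vecI) auto
  hence "mat_range B \<subseteq> W" using H unfolding mat_range_append_col[OF B w] by blast
  moreover have "0\<^sub>v n \<in> mat_range B" using vec_subspace_mat_range[OF B] unfolding vec_subspace_def by auto
  moreover have "w = 0\<^sub>v n + 1 \<cdot>\<^sub>v w" using w by (intro eq_vecI) auto
  ultimately show "mat_range B \<subseteq> W \<and> w \<in> W" using H unfolding mat_range_append_col[OF B w] by blast
next
  assume "mat_range B \<subseteq> W \<and> w \<in> W"
  thus "mat_range (append_col B w) \<subseteq> W"
    using W unfolding mat_range_append_col[OF B w] vec_subspace_def by blast
qed

lemma drop_last_col:
  assumes M: "M \<in> carrier_mat n (Suc k)"
  shows "drop_last_col M \<in> carrier_mat n k" "append_col (drop_last_col M) (col M k) = M"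
  using M unfolding append_col_def drop_last_col_def by (auto intro!: eq_matI simp: less_Suc_eq)

lemma append_col_inject:
  assumes "B \<in> carrier_mat n k" "B' \<in> carrier_mat n k" "w \<in> carrier_vec n" "w' \<in> carrier_vec n"
    and "append_col B w = append_col B' w'"
  shows "B = B' \<and> w = w'"
proof -
  have e: "append_col B w $$ (i,j) = append_col B' w' $$ (i,j)" for i j using assms(5) by simp
  have "B $$ (i,j) = B' $$ (i,j)" if "i < n" "j < k" for i j
    using e[of i j] assms(1,2) that unfolding append_col_def by auto
  moreover have "w $ i = w' $ i" if "i < n" for i
    using e[of i k] assms(1,2) that unfolding append_col_def by auto
  ultimately show ?thesis using assms(1-4) by (auto intro!: eq_matI eq_vecI)
qed

lemma bij_betw_append_col:
  fixes W :: "'a::{finite,field} vec set"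
  assumes W: "vec_subspace n W"
  defines "S \<equiv> \<lambda>k. {B \<in> carrier_mat n k. mat_range B \<subseteq> W \<and> mat_inj B}"
  shows "bij_betw (\<lambda>(B,w). append_col B w) (SIGMA B:S k. W - mat_range B) (S (Suc k))"
proof (rule bij_betw_imageI)
  have WC: "W \<subseteq> carrier_vec n" using W unfolding vec_subspace_def by auto
  thus "inj_on (\<lambda>(B,w). append_col B w) (SIGMA B:S k. W - mat_range B)"
    unfolding S_def by (auto intro!: inj_onI dest: append_col_inject[of _ n k])
  show "(\<lambda>(B,w). append_col B w) ` (SIGMA B:S k. W - mat_range B) = S (Suc k)"
  proof (intro equalityI subsetI)
    fix M assume "M \<in> (\<lambda>(B,w). append_col B w) ` (SIGMA B:S k. W - mat_range B)"
    then obtain B w where "B \<in> S k" "w \<in> W - mat_range B" "M = append_col B w" by auto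
    thus "M \<in> S (Suc k)"
      using WC mat_range_append_col_subset[OF W, of B k w] mat_inj_append_col[of B n k w]
      unfolding S_def by auto
  next
    fix M assume M: "M \<in> S (Suc k)"
    hence Mc: "M \<in> carrier_mat n (Suc k)" unfolding S_def by simp
    note d = drop_last_col[OF Mc]
    have w: "col M k \<in> carrier_vec n" using Mc by auto
    have "mat_range (drop_last_col M) \<subseteq> W \<and> col M k \<in> W"
      using M mat_range_append_col_subset[OF W d(1) w] d(2) unfolding S_def by simp
    moreover have "mat_inj (drop_last_col M) \<and> col M k \<notin> mat_range (drop_last_col M)"
      using M mat_inj_append_col[OF d(1) w] d(2) unfolding S_def by simp
    ultimately show "M \<in> (\<lambda>(B,w). append_col B w) ` (SIGMA B:S k. W - mat_range B)"
      using d unfolding S_def by (intro image_eqI[of _ _ "(drop_last_col M, col M k)"]) auto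
  qed
qed

lemma card_mat_inj_range_subset:
  fixes W :: "'a::{finite,field} vec set"
  assumes W: "vec_subspace n W"
  shows "card {B \<in> carrier_mat n k. mat_range B \<subseteq> W \<and> mat_inj B} = (\<Prod>i<k. card W - CARD('a) ^ i)"
proof (induction k)
  case 0
  have "{B \<in> carrier_mat n 0. mat_range B \<subseteq> W \<and> mat_inj B} = {0\<^sub>m n 0 :: 'a mat}"
    using W unfolding vec_subspace_def mat_inj_iff_card by (auto simp: mat_range_zero_cols)
  thus ?case by simp
next
  case (Suc k)
  let ?S = "\<lambda>k. {B \<in> carrier_mat n k. mat_range B \<subseteq> W \<and> mat_inj B}"
  have WC: "W \<subseteq> carrier_vec n" using W unfolding vec_subspace_def by auto
  have "card (?S (Suc k)) = card (SIGMA B:?S k. W - mat_range B)"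
    using bij_betw_append_col[OF W, of k] by (simp add: bij_betw_same_card)
  also have "\<dots> = (\<Sum>B\<in>?S k. card (W - mat_range B))"
    using WC by (intro card_SigmaI) (auto intro: finite_subset[OF _ finite_carrier_mat]
        finite_subset[OF _ finite_carrier_vec])
  also have "\<dots> = (\<Sum>B\<in>?S k. card W - CARD('a) ^ k)"
    by (intro sum.cong refl) (auto simp: card_Diff_subset mat_inj_iff_card)
  also have "\<dots> = card (?S k) * (card W - CARD('a) ^ k)" by simp
  finally show ?case using Suc.IH by simp
qed

lemma card_mat_inj: "card {B \<in> carrier_mat n k. mat_inj (B :: 'a::{finite,field} mat)}
    = (\<Prod>i<k. CARD('a) ^ n - CARD('a) ^ i)"
proof -
  have "{B \<in> carrier_mat n k. mat_inj (B :: 'a mat)}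
      = {B \<in> carrier_mat n k. mat_range B \<subseteq> carrier_vec n \<and> mat_inj B}"
    using mat_range_carrier by blast
  thus ?thesis using card_mat_inj_range_subset[OF vec_subspace_carrier_vec, of n k]
    by (simp add: card_carrier_vec)
qed

lemma mat_inj_onto_subspace:
  fixes W :: "'a::{finite,field} vec set"
  assumes W: "vec_subspace n W"
  obtains r B where "B \<in> carrier_mat n r" "mat_range B = W" "mat_inj B"
proof -
  \<comment> \<open>greedy extension, which must stop before the (n+1)-st column\<close>
  have "\<exists>r B. B \<in> carrier_mat n r \<and> mat_range B \<subseteq> W \<and> mat_inj B \<and> (mat_range B = W \<or> s \<le> r)" for s
  proof (induction s)
    case 0
    show ?case using W unfolding vec_subspace_def mat_inj_iff_card
      by (intro exI[of _ 0] exI[of _ "0\<^sub>m n 0"]) (auto simp: mat_range_zero_cols)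
  next
    case (Suc s)
    then obtain r B where B: "B \<in> carrier_mat n r" "mat_range B \<subseteq> W" "mat_inj B"
      "mat_range B = W \<or> s \<le> r" by blast
    show ?case
    proof (cases "mat_range B = W")
      case False
      then obtain w where w: "w \<in> W" "w \<notin> mat_range B" using B by blast
      hence "w \<in> carrier_vec n" using W unfolding vec_subspace_def by auto
      thus ?thesis using B w False mat_range_append_col_subset[OF W B(1)] mat_inj_append_col[OF B(1)]
        by (intro exI[of _ "Suc r"] exI[of _ "append_col B w"]) auto
    qed (use B in blast)
  qed
  then obtain r B where B: "B \<in> carrier_mat n r" "mat_range B \<subseteq> W" "mat_inj B"
    "mat_range B = W \<or> Suc n \<le> r" by blast
  have "CARD('a) ^ r \<le> CARD('a) ^ n"
    using B card_vec_subspace_le[OF vec_subspace_mat_range[OF B(1)]] unfolding mat_inj_iff_card by auto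
  thus ?thesis using B that by (auto simp: card_pow_le_iff)
qed

lemma zero_mat_mult_vec[simp]: "v \<in> carrier_vec n \<Longrightarrow> 0\<^sub>m m n *\<^sub>v (v :: 'a::semiring_0 vec) = 0\<^sub>v m"
  by (auto intro!: eq_vecI simp: scalar_prod_def)

lemma mult_mat_vec_zero[simp]: "A \<in> carrier_mat m n \<Longrightarrow> A *\<^sub>v 0\<^sub>v n = (0\<^sub>v m :: 'a::semiring_0 vec)"
  by (auto intro!: eq_vecI simp: scalar_prod_def)

lemma mult_mat_vec_unit_vec:
  "A \<in> carrier_mat m n \<Longrightarrow> j < n \<Longrightarrow> A *\<^sub>v unit_vec n j = col (A :: 'a::field mat) j"
  by (intro eq_vecI) auto

lemma mat_eq_by_mult_vec:
  fixes A :: "'a::field mat"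
  assumes A: "A \<in> carrier_mat m n" and A': "A' \<in> carrier_mat m n"
    and e: "\<And>u. u \<in> carrier_vec n \<Longrightarrow> A *\<^sub>v u = A' *\<^sub>v u"
  shows "A = A'"
proof (rule eq_matI)
  fix i j assume "i < dim_row A'" "j < dim_col A'"
  moreover have "col A j = col A' j" if "j < n" for j
    using mult_mat_vec_unit_vec[OF A that] mult_mat_vec_unit_vec[OF A' that] e[of "unit_vec n j"] by simp
  ultimately show "A $$ (i,j) = A' $$ (i,j)" using A A' by (metis carrier_matD col_def index_vec)
qed (use A A' in auto)

lemma factor_through_range:
  fixes A :: "'a::field mat"
  assumes A: "A \<in> carrier_mat m n" and B: "B \<in> carrier_mat m r" and sub: "mat_range A \<subseteq> mat_range B"
  obtains C where "C \<in> carrier_mat r n" "A = B * C"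
proof -
  have "\<exists>c \<in> carrier_vec r. B *\<^sub>v c = col A j" if j: "j < n" for j
  proof -
    have "col A j \<in> mat_range A"
      using A j mult_mat_vec_unit_vec[OF A j, symmetric] unfolding mat_range_def by auto
    hence "col A j \<in> mat_range B" using sub by auto
    thus ?thesis using B unfolding mat_range_def by auto
  qed
  then obtain c where c: "\<And>j. j < n \<Longrightarrow> c j \<in> carrier_vec r \<and> B *\<^sub>v c j = col A j" by metis
  define C where "C = mat r n (\<lambda>(i,j). c j $ i)"
  have C: "C \<in> carrier_mat r n" unfolding C_def by simp
  have colC: "col C j = c j" if "j < n" for j
    using c[OF that] that unfolding C_def by (intro eq_vecI) auto
  have "A = B * C"
  proof (rule eq_matI)
    fix i j assume "i < dim_row (B * C)" "j < dim_col (B * C)"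
    hence ij: "i < m" "j < n" using B C by auto
    hence "(B * C) $$ (i,j) = (B *\<^sub>v c j) $ i" using B C colC[OF ij(2)] by simp
    thus "A $$ (i,j) = (B * C) $$ (i,j)" using c[OF ij(2)] ij A by simp
  qed (use A B C in auto)
  thus ?thesis using C that by blast
qed

lemma card_mat_range_transpose_le:
  fixes A :: "'a::{finite,field} mat"
  assumes A: "A \<in> carrier_mat m n"
  shows "card (mat_range A\<^sup>T) \<le> card (mat_range A)"
proof -
  obtain r B where B: "B \<in> carrier_mat m r" "mat_range B = mat_range A" "mat_inj B"
    using mat_inj_onto_subspace[OF vec_subspace_mat_range[OF A]] .
  then obtain C where C: "C \<in> carrier_mat r n" "A = B * C" using factor_through_range[OF A B(1)] by auto
  have "A\<^sup>T = C\<^sup>T * B\<^sup>T" using B C transpose_mult by metis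
  hence "card (mat_range A\<^sup>T) \<le> card (mat_range C\<^sup>T)"
    using B C mat_range_mult_subset[of "C\<^sup>T" n r "B\<^sup>T" m] by (intro card_mono) auto
  also have "\<dots> \<le> CARD('a) ^ r" using card_mat_range_le_cols[of "C\<^sup>T"] C by simp
  also have "\<dots> = card (mat_range A)" using B unfolding mat_inj_iff_card by simp
  finally show ?thesis .
qed

lemma card_mat_range_transpose:
  fixes A :: "'a::{finite,field} mat"
  assumes "A \<in> carrier_mat m n"
  shows "card (mat_range A\<^sup>T) = card (mat_range A)"
  using card_mat_range_transpose_le[OF assms] card_mat_range_transpose_le[of "A\<^sup>T" n m] assms by simp

lemma card_mat_surj: "card {C \<in> carrier_mat k n. card (mat_range (C :: 'a::{finite,field} mat)) = CARD('a) ^ k}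
    = (\<Prod>i<k. CARD('a) ^ n - CARD('a) ^ i)"
proof -
  have "bij_betw transpose_mat {C \<in> carrier_mat k n. card (mat_range (C :: 'a mat)) = CARD('a) ^ k}
     {B \<in> carrier_mat n k. mat_inj B}"
    by (intro bij_betwI[of _ _ _ transpose_mat])
      (auto simp: mat_inj_iff_card card_mat_range_transpose[of _ k n] card_mat_range_transpose[of _ n k])
  thus ?thesis using card_mat_inj[of n k] by (simp add: bij_betw_same_card)
qed

lemma card_mat_fibre:
  fixes A :: "'a::{finite,field} mat"
  assumes A: "A \<in> carrier_mat m n" and y: "y \<in> mat_range A"
  shows "card {x \<in> carrier_vec n. A *\<^sub>v x = y} = card (mat_kernel A)"
proof -
  obtain x0 where x0: "x0 \<in> carrier_vec n" "y = A *\<^sub>v x0" using y A unfolding mat_range_def by auto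
  have "{x \<in> carrier_vec n. A *\<^sub>v x = y} = (\<lambda>z. x0 + z) ` mat_kernel A"
  proof (intro equalityI subsetI)
    fix x assume "x \<in> {x \<in> carrier_vec n. A *\<^sub>v x = y}"
    hence x: "x \<in> carrier_vec n" "A *\<^sub>v x = A *\<^sub>v x0" unfolding x0 by auto
    have "A *\<^sub>v (x - x0) = 0\<^sub>v m" using A x x0 by (simp add: mult_minus_distrib_mat_vec)
    hence "x - x0 \<in> mat_kernel A" using A x x0 by (auto intro: mat_kernelI)
    moreover have "x = x0 + (x - x0)" using x x0 by (intro eq_vecI) auto
    ultimately show "x \<in> (\<lambda>z. x0 + z) ` mat_kernel A" by blast
  next
    fix x assume "x \<in> (\<lambda>z. x0 + z) ` mat_kernel A"
    then obtain z where z: "z \<in> carrier_vec n" "A *\<^sub>v z = 0\<^sub>v m" "x = x0 + z"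
      using A unfolding mat_kernel_def by auto
    have "A *\<^sub>v x = A *\<^sub>v x0 + A *\<^sub>v z" using A z x0 by (simp add: mult_add_distrib_mat_vec)
    thus "x \<in> {x \<in> carrier_vec n. A *\<^sub>v x = y}" using z x0 A by auto
  qed
  moreover have "inj_on (\<lambda>z. x0 + z) (mat_kernel A)"
  proof (rule inj_onI)
    fix z z' assume "z \<in> mat_kernel A" "z' \<in> mat_kernel A" and e: "x0 + z = x0 + z'"
    hence c: "z \<in> carrier_vec n" "z' \<in> carrier_vec n" using mat_kernel_carrier[OF A] by auto
    have "z $ i = z' $ i" if "i < n" for i
      using arg_cong[OF e, of "\<lambda>v. v $ i"] that c x0 by simp
    thus "z = z'" using c by (intro eq_vecI) auto
  qed
  ultimately show ?thesis by (simp add: card_image)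
qed

lemma card_mat_range_mult_card_kernel:
  fixes A :: "'a::{finite,field} mat"
  assumes A: "A \<in> carrier_mat m n"
  shows "card (mat_range A) * card (mat_kernel A) = CARD('a) ^ n"
proof -
  let ?F = "\<lambda>y. {x \<in> carrier_vec n. A *\<^sub>v x = y}"
  have "carrier_vec n = (\<Union>y\<in>mat_range A. ?F y)" using A unfolding mat_range_def by auto
  hence "CARD('a) ^ n = card (\<Union>y\<in>mat_range A. ?F y)" by (metis card_carrier_vec)
  also have "\<dots> = (\<Sum>y\<in>mat_range A. card (?F y))" by (rule card_UN_disjoint) auto
  also have "\<dots> = card (mat_range A) * card (mat_kernel A)" using card_mat_fibre[OF A] by simp
  finally show ?thesis by simp
qed

lemma mult_eq_0_iff_range_subset_kernel:
  fixes C :: "'a::field mat"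
  assumes C: "C \<in> carrier_mat k n" and B: "B \<in> carrier_mat n r"
  shows "C * B = 0\<^sub>m k r \<longleftrightarrow> mat_range B \<subseteq> mat_kernel C"
proof -
  have "C * B = 0\<^sub>m k r \<longleftrightarrow> (\<forall>x \<in> carrier_vec r. (C * B) *\<^sub>v x = 0\<^sub>v k)"
  proof
    assume "\<forall>x \<in> carrier_vec r. (C * B) *\<^sub>v x = 0\<^sub>v k"
    thus "C * B = 0\<^sub>m k r" using C B by (intro mat_eq_by_mult_vec[of _ k r]) auto
  qed simp
  also have "\<dots> \<longleftrightarrow> (\<forall>x \<in> carrier_vec r. C *\<^sub>v (B *\<^sub>v x) = 0\<^sub>v k)"
    using C B by (intro ball_cong) (simp_all add: assoc_mult_mat_vec)
  also have "\<dots> \<longleftrightarrow> mat_range B \<subseteq> mat_kernel C"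
    using C B unfolding mat_range_def mat_kernel_def by auto
  finally show ?thesis .
qed

section \<open>Counting differentials of a given rank\<close>

definition square_zero_rank :: "nat \<Rightarrow> nat \<Rightarrow> 'a::{finite,field} mat set" where
  "square_zero_rank n k = {D \<in> carrier_mat n n. D * D = 0\<^sub>m n n \<and> card (mat_range D) = CARD('a) ^ k}"

definition rank_factor_pairs :: "nat \<Rightarrow> nat \<Rightarrow> ('a::{finite,field} mat \<times> 'a mat) set" where
  "rank_factor_pairs n k = (SIGMA C:{C \<in> carrier_mat k n. card (mat_range C) = CARD('a) ^ k}.
     {B \<in> carrier_mat n k. mat_range B \<subseteq> mat_kernel C \<and> mat_inj B})"

lemma mat_inj_mult_cancel:
  fixes B :: "'a::field mat"
  assumes B: "B \<in> carrier_mat n k" "mat_inj B" and C: "C \<in> carrier_mat k m" "C' \<in> carrier_mat k m"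
    and e: "B * C = B * C'"
  shows "C = C'"
proof (rule mat_eq_by_mult_vec[OF C])
  fix u :: "'a vec" assume u: "u \<in> carrier_vec m"
  have "B *\<^sub>v (C *\<^sub>v u) = B *\<^sub>v (C' *\<^sub>v u)" using B C u e by (metis assoc_mult_mat_vec)
  thus "C *\<^sub>v u = C' *\<^sub>v u" using B C u unfolding mat_inj_def by (auto dest: inj_onD)
qed

lemma rank_factor_pair_mult:
  fixes B C :: "'a::{finite,field} mat"
  assumes "(C, B) \<in> rank_factor_pairs n k"
  shows "B * C \<in> square_zero_rank n k" "mat_range (B * C) = mat_range B"
proof -
  have C: "C \<in> carrier_mat k n" "card (mat_range C) = CARD('a) ^ k"
    and B: "B \<in> carrier_mat n k" "mat_range B \<subseteq> mat_kernel C" "mat_inj B"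
    using assms unfolding rank_factor_pairs_def by auto
  have "B * C * (B * C) = B * (C * (B * C))" using B C by (intro assoc_mult_mat) auto
  also have "C * (B * C) = (C * B) * C" using B C by (intro assoc_mult_mat[symmetric]) auto
  also have "C * B = 0\<^sub>m k k" using mult_eq_0_iff_range_subset_kernel[OF C(1) B(1)] B by simp
  finally have sq: "B * C * (B * C) = 0\<^sub>m n n" using B C by simp
  have "mat_range C = carrier_vec k"
    using C mat_range_carrier[OF C(1)] card_subset_eq[of "carrier_vec k" "mat_range C"]
    by (simp add: card_carrier_vec)
  thus range: "mat_range (B * C) = mat_range B"
    unfolding mat_range_mult[OF B(1) C(1)] using B unfolding mat_range_def by simp
  show "B * C \<in> square_zero_rank n k"
    using B C sq range unfolding square_zero_rank_def mat_inj_iff_card by auto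
qed

lemma square_zero_rank_factor:
  fixes B D :: "'a::{finite,field} mat"
  assumes D: "D \<in> square_zero_rank n k"
    and B: "B \<in> carrier_mat n k" "mat_range B \<subseteq> mat_range D" "mat_inj B"
  obtains C where "(C, B) \<in> rank_factor_pairs n k" "D = B * C"
proof -
  have D: "D \<in> carrier_mat n n" "D * D = 0\<^sub>m n n" "card (mat_range D) = CARD('a) ^ k"
    using D unfolding square_zero_rank_def by auto
  have range: "mat_range B = mat_range D"
    using B D(3) by (intro card_subset_eq) (auto simp: mat_inj_iff_card)
  then obtain C where C: "C \<in> carrier_mat k n" "D = B * C" using factor_through_range[OF D(1) B(1)] by auto
  have "card (mat_range D) \<le> card (mat_range C)"
    unfolding C(2) mat_range_mult[OF B(1) C(1)] by (rule card_image_le) simp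
  hence card_C: "card (mat_range C) = CARD('a) ^ k"
    using card_mat_range_le_rows[OF C(1)] D(3) by simp
  \<comment> \<open>B (C B u) = D (B u) = D (D z) = 0, and B is injective\<close>
  have "C * B = 0\<^sub>m k k"
  proof (rule mat_eq_by_mult_vec[of _ k k])
    fix u :: "'a vec" assume u: "u \<in> carrier_vec k"
    have "B *\<^sub>v u \<in> mat_range D" using range u B unfolding mat_range_def by auto
    then obtain z where z: "z \<in> carrier_vec n" "B *\<^sub>v u = D *\<^sub>v z" using D unfolding mat_range_def by auto
    have "B *\<^sub>v ((C * B) *\<^sub>v u) = D *\<^sub>v (B *\<^sub>v u)"
      using B C u by (simp add: C(2) assoc_mult_mat_vec)
    also have "\<dots> = (D * D) *\<^sub>v z" by (simp only: z(2) assoc_mult_mat_vec[OF D(1) D(1) z(1)])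
    also have "\<dots> = B *\<^sub>v 0\<^sub>v k" using D z B by simp
    finally have "B *\<^sub>v ((C * B) *\<^sub>v u) = B *\<^sub>v 0\<^sub>v k" .
    hence "(C * B) *\<^sub>v u = 0\<^sub>v k"
      by (rule inj_onD[OF B(3)[unfolded mat_inj_def]]) (use B C u in auto)
    thus "(C * B) *\<^sub>v u = 0\<^sub>m k k *\<^sub>v u" using u by simp
  qed (use B C in auto)
  hence "mat_range B \<subseteq> mat_kernel C" using mult_eq_0_iff_range_subset_kernel[OF C(1) B(1)] by simp
  thus ?thesis using that B C card_C unfolding rank_factor_pairs_def by auto
qed

lemma card_rank_factor_pairs_fibre:
  fixes D :: "'a::{finite,field} mat"
  assumes D: "D \<in> square_zero_rank n k"
  shows "card {(C, B) \<in> rank_factor_pairs n k. B * C = D} = (\<Prod>i<k. CARD('a) ^ k - CARD('a) ^ i)"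
proof -
  let ?F = "{(C, B) \<in> rank_factor_pairs n k. B * C = D}"
  let ?Bs = "{B \<in> carrier_mat n k. mat_range B \<subseteq> mat_range D \<and> mat_inj B}"
  have "bij_betw snd ?F ?Bs"
  proof (rule bij_betw_imageI)
    show "inj_on snd ?F"
    proof (rule inj_onI)
      fix p p' assume p: "p \<in> ?F" and p': "p' \<in> ?F" and e: "snd p = snd p'"
      obtain C B C' where pp': "p = (C, B)" "p' = (C', B)" using e by (cases p, cases p') auto
      have "B \<in> carrier_mat n k" "mat_inj B" "C \<in> carrier_mat k n" "C' \<in> carrier_mat k n"
        "B * C = B * C'"
        using p p' unfolding pp' rank_factor_pairs_def by auto
      thus "p = p'" unfolding pp' using mat_inj_mult_cancel by blast
    qed
    show "snd ` ?F = ?Bs"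
    proof (intro equalityI subsetI)
      fix B assume "B \<in> snd ` ?F"
      then obtain C where CB: "(C, B) \<in> rank_factor_pairs n k" "B * C = D" by auto
      hence "mat_range D = mat_range B" using rank_factor_pair_mult(2)[OF CB(1)] by simp
      thus "B \<in> ?Bs" using CB(1) unfolding rank_factor_pairs_def by auto
    next
      fix B assume "B \<in> ?Bs"
      then obtain C where "(C, B) \<in> rank_factor_pairs n k" "D = B * C"
        using square_zero_rank_factor[OF D] by auto
      thus "B \<in> snd ` ?F" by (intro image_eqI[of _ _ "(C, B)"]) auto
    qed
  qed
  hence "card ?F = card ?Bs" by (rule bij_betw_same_card)
  thus ?thesis using card_mat_inj_range_subset[OF vec_subspace_mat_range, of D n n k] D
    unfolding square_zero_rank_def by simp
qed

lemma card_rank_factor_pairs: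
  "card (rank_factor_pairs n k :: ('a::{finite,field} mat \<times> 'a mat) set)
    = (\<Prod>i<k. CARD('a) ^ n - CARD('a) ^ i) * (\<Prod>i<k. CARD('a) ^ (n - k) - CARD('a) ^ i)"
proof -
  let ?Surj = "{C :: 'a mat. C \<in> carrier_mat k n \<and> card (mat_range C) = CARD('a) ^ k}"
  let ?BK = "\<lambda>C. {B :: 'a mat. B \<in> carrier_mat n k \<and> mat_range B \<subseteq> mat_kernel C \<and> mat_inj B}"
  have "card (?BK C) = (\<Prod>i<k. CARD('a) ^ (n - k) - CARD('a) ^ i)" if C: "C \<in> ?Surj" for C
  proof -
    have "k \<le> n" using C card_mat_range_le_cols[of C] by (auto simp: card_pow_le_iff)
    hence "CARD('a) ^ k * card (mat_kernel C) = CARD('a) ^ k * CARD('a) ^ (n - k)"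
      using C card_mat_range_mult_card_kernel[of C k n] by (simp add: power_add[symmetric])
    hence "card (mat_kernel C) = CARD('a) ^ (n - k)" by simp
    thus ?thesis using card_mat_inj_range_subset[OF vec_subspace_mat_kernel, of C k n k] C by simp
  qed
  moreover have "card (rank_factor_pairs n k :: ('a mat \<times> 'a mat) set) = (\<Sum>C\<in>?Surj. card (?BK C))"
    unfolding rank_factor_pairs_def
    by (rule card_SigmaI) (auto intro: finite_subset[OF _ finite_carrier_mat])
  ultimately show ?thesis using card_mat_surj[where 'a='a, of k n] by simp
qed

lemma card_square_zero_rank:
  "card (square_zero_rank n k :: 'a::{finite,field} mat set) * (\<Prod>i<k. CARD('a) ^ k - CARD('a) ^ i)
    = (\<Prod>i<k. CARD('a) ^ n - CARD('a) ^ i) * (\<Prod>i<k. CARD('a) ^ (n - k) - CARD('a) ^ i)"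
proof -
  let ?S = "square_zero_rank n k :: 'a mat set" and ?P = "rank_factor_pairs n k :: ('a mat \<times> 'a mat) set"
  let ?F = "\<lambda>D. {(C, B) \<in> ?P. B * C = D}"
  have fin: "finite ?S" "finite ?P"
    unfolding square_zero_rank_def rank_factor_pairs_def
    by (auto intro: finite_subset[OF _ finite_carrier_mat])
  have "?P = (\<Union>D\<in>?S. ?F D)" using rank_factor_pair_mult(1) by auto
  hence "card ?P = card (\<Union>D\<in>?S. ?F D)" by simp
  also have "\<dots> = (\<Sum>D\<in>?S. card (?F D))"
  proof (rule card_UN_disjoint)
    show "\<forall>D\<in>?S. finite (?F D)" using fin(2) by (auto intro: finite_subset[of _ ?P])
  qed (use fin(1) in auto)
  also have "\<dots> = (\<Sum>D\<in>?S. \<Prod>i<k. CARD('a) ^ k - CARD('a) ^ i)"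
    by (intro sum.cong refl card_rank_factor_pairs_fibre)
  also have "\<dots> = card ?S * (\<Prod>i<k. CARD('a) ^ k - CARD('a) ^ i)" by simp
  finally show ?thesis using card_rank_factor_pairs[where 'a='a, of n k] by simp
qed

lemma (in vectorspace) card_carrier_eq_pow_dim:
  assumes "finite (carrier V)"
  shows "card (carrier V) = card (carrier K) ^ dim"
proof -
  have "fin_dim" unfolding fin_dim_def
    using assms span_is_subset2[of "carrier V"] in_own_span[of "carrier V"]
    by (intro exI[of _ "carrier V"]) auto
  then obtain \<beta> where \<beta>: "finite \<beta>" "basis \<beta>" using finite_basis_exists by blast
  have \<beta>C: "\<beta> \<subseteq> carrier V" using \<beta>(2) unfolding basis_def by auto
  have unique: "\<exists>!a. a \<in> \<beta> \<rightarrow>\<^sub>E carrier K \<and> lincomb a \<beta> = v" if "v \<in> carrier V" for v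
    using basis_criterion[OF \<beta>(1) \<beta>C] \<beta>(2) that by simp
  have "bij_betw (\<lambda>a. lincomb a \<beta>) (\<beta> \<rightarrow>\<^sub>E carrier K) (carrier V)"
  proof (rule bij_betwI')
    fix a assume "a \<in> \<beta> \<rightarrow>\<^sub>E carrier K"
    thus "lincomb a \<beta> \<in> carrier V" using \<beta>C by (intro lincomb_closed) auto
  next
    fix a b assume a: "a \<in> \<beta> \<rightarrow>\<^sub>E carrier K" and b: "b \<in> \<beta> \<rightarrow>\<^sub>E carrier K"
    have u: "\<exists>!c. c \<in> \<beta> \<rightarrow>\<^sub>E carrier K \<and> lincomb c \<beta> = lincomb a \<beta>"
      using a \<beta>C by (intro unique lincomb_closed) auto
    show "(lincomb a \<beta> = lincomb b \<beta>) = (a = b)"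
    proof
      assume "lincomb a \<beta> = lincomb b \<beta>"
      hence "(THE c. c \<in> \<beta> \<rightarrow>\<^sub>E carrier K \<and> lincomb c \<beta> = lincomb a \<beta>) = b"
        using b by (intro the1_equality[OF u]) simp
      moreover have "(THE c. c \<in> \<beta> \<rightarrow>\<^sub>E carrier K \<and> lincomb c \<beta> = lincomb a \<beta>) = a"
        using a by (intro the1_equality[OF u]) simp
      ultimately show "a = b" by simp
    qed simp
  next
    fix v assume "v \<in> carrier V"
    then obtain a where "a \<in> \<beta> \<rightarrow>\<^sub>E carrier K" "lincomb a \<beta> = v"
      using ex1_implies_ex[OF unique] by auto
    thus "\<exists>a \<in> \<beta> \<rightarrow>\<^sub>E carrier K. v = lincomb a \<beta>" by auto
  qed
  hence "card (carrier V) = card (\<beta> \<rightarrow>\<^sub>E carrier K)" by (simp add: bij_betw_same_card)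
  thus ?thesis using \<beta> dim_basis by (simp add: card_PiE)
qed

lemma card_mat_range_rank:
  fixes D :: "'a::{finite,field} mat"
  assumes D: "D \<in> carrier_mat n m"
  shows "card (mat_range D) = CARD('a) ^ vec_space.rank n D"
proof -
  interpret VS: vec_space "TYPE('a)" n .
  have span: "VS.span (set (cols D)) = mat_range D"
    using VS.col_space_eq[OF D] D unfolding VS.col_space_def mat_range_def by auto
  have "vectorspace class_ring (VS.span_vs (set (cols D)))"
    using D cols_dim VS.span_is_subspace VS.subspace_is_vs by (metis carrier_matD(1))
  hence "card (carrier (VS.span_vs (set (cols D)))) = card (carrier (class_ring :: 'a ring)) ^ VS.rank D"
    unfolding VS.rank_def by (rule vectorspace.card_carrier_eq_pow_dim) (simp add: span)
  thus ?thesis using span by simp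
qed

lemma card_mat_kernel:
  fixes D :: "'a::{finite,field} mat"
  assumes D: "D \<in> carrier_mat n m"
  shows "card (mat_kernel D) = CARD('a) ^ kernel_dim D"
proof -
  interpret K: kernel n m D by unfold_locales (rule D)
  have "finite (mat_kernel D)" using mat_kernel_carrier[OF D] by (rule finite_subset) simp
  thus ?thesis using K.Ker.card_carrier_eq_pow_dim by simp
qed

lemma differential_rank:
  fixes D :: "'a::{finite,field} mat"
  assumes "D \<in> differentials n"
  shows "D \<in> square_zero_rank n (vec_space.rank n D)" "2 * vec_space.rank n D \<le> n"
    "homology_dim n D = n - 2 * vec_space.rank n D"
proof -
  have D: "D \<in> carrier_mat n n" "D * D = 0\<^sub>m n n" using assms unfolding differentials_def by auto
  let ?k = "vec_space.rank n D" and ?kd = "kernel_dim D"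
  have "CARD('a) ^ (?k + ?kd) = CARD('a) ^ n"
    using card_mat_range_mult_card_kernel[OF D(1)] card_mat_range_rank[OF D(1)] card_mat_kernel[OF D(1)]
    by (simp add: power_add)
  hence sum: "?k + ?kd = n" by (simp add: card_pow_eq_iff)
  have "mat_range D \<subseteq> mat_kernel D" using mult_eq_0_iff_range_subset_kernel[OF D(1) D(1)] D(2) by simp
  hence "card (mat_range D) \<le> card (mat_kernel D)"
    using mat_kernel_carrier[OF D(1)] by (intro card_mono) (auto intro: finite_subset)
  hence "?k \<le> ?kd" using card_mat_range_rank[OF D(1)] card_mat_kernel[OF D(1)] by (simp add: card_pow_le_iff)
  thus "D \<in> square_zero_rank n ?k" "2 * ?k \<le> n" "homology_dim n D = n - 2 * ?k"
    using D sum card_mat_range_rank[OF D(1)] unfolding square_zero_rank_def homology_dim_def by auto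
qed

lemma square_zero_rank_disjoint:
  "k \<noteq> k' \<Longrightarrow> square_zero_rank n k \<inter> (square_zero_rank n k' :: 'a::{finite,field} mat set) = {}"
  unfolding square_zero_rank_def by (auto simp: card_pow_eq_iff)

lemma c_r_count_eq_card_square_zero_rank:
  fixes T :: "'a::{finite,field} itself"
  shows "c_r_count T r (r + 2 * m) = card (square_zero_rank (r + 2 * m) m :: 'a mat set)"
proof -
  let ?n = "r + 2 * m"
  have "{D \<in> differentials ?n. homology_dim ?n D = r} = (square_zero_rank ?n m :: 'a mat set)"
  proof (intro equalityI subsetI)
    fix D :: "'a mat" assume "D \<in> {D \<in> differentials ?n. homology_dim ?n D = r}"
    hence D: "D \<in> differentials ?n" "homology_dim ?n D = r" by auto
    hence "vec_space.rank ?n D = m" using differential_rank(2,3)[OF D(1)] by simp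
    thus "D \<in> square_zero_rank ?n m" using differential_rank(1)[OF D(1)] by simp
  next
    fix D :: "'a mat" assume D: "D \<in> square_zero_rank ?n m"
    hence Dd: "D \<in> differentials ?n" unfolding differentials_def square_zero_rank_def by auto
    hence "vec_space.rank ?n D = m" using differential_rank(1)[OF Dd] D square_zero_rank_disjoint by blast
    thus "D \<in> {D \<in> differentials ?n. homology_dim ?n D = r}" using differential_rank(3)[OF Dd] Dd by simp
  qed
  thus ?thesis unfolding c_r_count_def by simp
qed

lemma c_count_eq_sum_card_square_zero_rank:
  fixes T :: "'a::{finite,field} itself"
  shows "c_count T n = (\<Sum>k\<le>n div 2. card (square_zero_rank n k :: 'a mat set))"
proof -
  have "(differentials n :: 'a mat set) = (\<Union>k\<le>n div 2. square_zero_rank n k)"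
  proof (intro equalityI subsetI)
    fix D :: "'a mat" assume D: "D \<in> differentials n"
    thus "D \<in> (\<Union>k\<le>n div 2. square_zero_rank n k)"
      using differential_rank[OF D] by (intro UN_I[of "vec_space.rank n D"]) auto
  qed (auto simp: differentials_def square_zero_rank_def)
  moreover have "finite (square_zero_rank n k :: 'a mat set)" for k
    unfolding square_zero_rank_def by (auto intro: finite_subset[OF _ finite_carrier_mat])
  ultimately show ?thesis
    unfolding c_count_def by (simp add: card_UN_disjoint square_zero_rank_disjoint)
qed

section \<open>The closed formula\<close>

definition qprod :: "real \<Rightarrow> nat \<Rightarrow> real" where
  "qprod Q m = (\<Prod>j=1..m. Q ^ j - 1)"

definition frame_prod :: "real \<Rightarrow> nat \<Rightarrow> nat \<Rightarrow> real" where
  "frame_prod Q a k = (\<Prod>i<k. Q ^ a - Q ^ i)"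

definition rank_count :: "real \<Rightarrow> nat \<Rightarrow> nat \<Rightarrow> real" where
  "rank_count Q r k = (\<Prod>i<k. Q ^ i) * qprod Q (r + 2 * k) / (qprod Q r * qprod Q k)"

lemma qprod_0[simp]: "qprod Q 0 = 1"
  unfolding qprod_def by simp

lemma qprod_Suc: "qprod Q (Suc m) = qprod Q m * (Q ^ Suc m - 1)"
  unfolding qprod_def by (simp add: prod.nat_ivl_Suc')

lemma power_minus_one_pos: "Q > 1 \<Longrightarrow> 0 < n \<Longrightarrow> Q ^ n - 1 > (0::real)"
  by (simp add: one_less_power)

lemma qprod_pos: "Q > 1 \<Longrightarrow> qprod Q m > 0"
  unfolding qprod_def by (intro prod_pos) (simp add: power_minus_one_pos)

lemma rank_count_pos: "Q > 1 \<Longrightarrow> rank_count Q r k > 0"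
  unfolding rank_count_def using qprod_pos by (simp add: prod_pos)

lemma qprod_split:
  "k \<le> a \<Longrightarrow> qprod Q a = qprod Q (a - k) * (\<Prod>i<k. Q ^ (a - i) - 1)"
proof (induction k)
  case (Suc k)
  hence "a - k = Suc (a - Suc k)" by simp
  hence "qprod Q (a - k) = qprod Q (a - Suc k) * (Q ^ (a - k) - 1)" by (simp add: qprod_Suc)
  thus ?case using Suc by (simp add: mult.assoc)
qed simp

lemma frame_prod_eq:
  assumes "k \<le> a"
  shows "frame_prod Q a k * qprod Q (a - k) = (\<Prod>i<k. Q ^ i) * qprod Q a"
proof -
  have "Q ^ a - Q ^ i = Q ^ i * (Q ^ (a - i) - 1)" if "i < k" for i
    using that assms by (simp add: right_diff_distrib power_add[symmetric])
  hence "frame_prod Q a k = (\<Prod>i<k. Q ^ i) * (\<Prod>i<k. Q ^ (a - i) - 1)"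
    unfolding frame_prod_def by (simp add: prod.distrib)
  thus ?thesis using qprod_split[OF assms, of Q] by simp
qed

lemma real_card_square_zero_rank:
  "real (card (square_zero_rank (r + 2 * k) k :: 'a::{finite,field} mat set))
    = rank_count (real CARD('a)) r k"
proof -
  let ?Q = "real CARD('a)"
  have Q: "?Q > 1" using card_field_ge_2[where 'a='a] by simp
  have frame: "real (\<Prod>i<k. CARD('a) ^ a - CARD('a) ^ i) = frame_prod ?Q a k" if "k \<le> a" for a
    unfolding frame_prod_def using that by (simp add: of_nat_diff card_pow_le_iff)
  have "card (square_zero_rank (r + 2 * k) k :: 'a mat set) * (\<Prod>i<k. CARD('a) ^ k - CARD('a) ^ i)
      = (\<Prod>i<k. CARD('a) ^ (r + 2 * k) - CARD('a) ^ i) * (\<Prod>i<k. CARD('a) ^ (r + k) - CARD('a) ^ i)"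
    using card_square_zero_rank[where 'a='a, of "r + 2 * k" k] by (simp add: add.commute)
  from arg_cong[OF this, of real]
  have count: "real (card (square_zero_rank (r + 2 * k) k :: 'a mat set)) * frame_prod ?Q k k
      = frame_prod ?Q (r + 2 * k) k * frame_prod ?Q (r + k) k"
    by (simp only: of_nat_mult frame order_refl le_add2 trans_le_add2 mult_le_mono2)
  have e: "frame_prod ?Q k k = (\<Prod>i<k. ?Q ^ i) * qprod ?Q k"
    "frame_prod ?Q (r + 2 * k) k * qprod ?Q (r + k) = (\<Prod>i<k. ?Q ^ i) * qprod ?Q (r + 2 * k)"
    "frame_prod ?Q (r + k) k * qprod ?Q r = (\<Prod>i<k. ?Q ^ i) * qprod ?Q (r + k)"
    using frame_prod_eq[of k k ?Q] frame_prod_eq[of k "r + 2 * k" ?Q] frame_prod_eq[of k "r + k" ?Q]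
    by (simp_all add: add.commute)
  have pos: "(\<Prod>i<k. ?Q ^ i) > 0" "qprod ?Q k > 0" "qprod ?Q r > 0" "qprod ?Q (r + k) > 0"
    using Q qprod_pos by (simp_all add: prod_pos)
  have cancel: "c = T * N / (R * K)"
    if "c * (T * K) = F1 * F2" "F1 * M = T * N" "F2 * R = T * M" "T > 0" "K > 0" "R > 0" "M > 0"
    for c T K F1 F2 M N R :: real
  proof -
    have "c * K * R * (T * M) = (F1 * M) * (F2 * R)" using that(1) by (simp add: ac_simps)
    hence "c * K * R * (T * M) = T * N * (T * M)" using that(2,3) by simp
    hence "c * K * R = T * N" using that(4,7) by simp
    thus ?thesis using that(5,6) by (simp add: field_simps)
  qed
  show ?thesis unfolding rank_count_def by (rule cancel[OF count[unfolded e(1)] e(2,3) pos])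
qed

section \<open>Passing to the limit\<close>

definition limit_weight :: "real \<Rightarrow> nat \<Rightarrow> nat \<Rightarrow> real" where
  "limit_weight Q e s = (\<Prod>i<s. Q / ((Q ^ (e + 2 * i + 1) - 1) * (Q ^ (e + 2 * i + 2) - 1)))"

definition weight :: "real \<Rightarrow> nat \<Rightarrow> nat \<Rightarrow> nat \<Rightarrow> real" where
  "weight Q e M s = limit_weight Q e s * (\<Prod>i<s. 1 - 1 / Q ^ (M - i))"

lemma limit_weight_0[simp]: "limit_weight Q e 0 = 1"
  unfolding limit_weight_def by simp

lemma limit_weight_Suc:
  "limit_weight Q e (Suc s) = limit_weight Q e s * (Q / ((Q ^ (e + 2 * s + 1) - 1) * (Q ^ (e + 2 * s + 2) - 1)))"
  unfolding limit_weight_def by simp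

lemma limit_weight_pos:
  assumes "Q > 1"
  shows "limit_weight Q e s > 0"
  unfolding limit_weight_def
  by (intro prod_pos divide_pos_pos mult_pos_pos power_minus_one_pos) (use assms in auto)

lemma limit_weight_eq:
  assumes Q: "Q > 1"
  shows "limit_weight Q e s = Q ^ s * qprod Q e / qprod Q (e + 2 * s)"
proof -
  have "limit_weight Q e s * qprod Q (e + 2 * s) = Q ^ s * qprod Q e"
  proof (induction s)
    case (Suc s)
    have "qprod Q (e + 2 * Suc s) = qprod Q (e + 2 * s) * (Q ^ (e + 2 * s + 1) - 1) * (Q ^ (e + 2 * s + 2) - 1)"
      using qprod_Suc[of Q "Suc (e + 2 * s)"] qprod_Suc[of Q "e + 2 * s"] by simp
    moreover have "Q ^ (e + 2 * s + 1) - 1 > 0" "Q ^ (e + 2 * s + 2) - 1 > 0"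
      by (rule power_minus_one_pos[OF Q], simp)+
    moreover have "b * (Q / (B1 * B2)) * (P * B1 * B2) = Q * (b * P)" if "B1 > 0" "B2 > 0" for b P B1 B2 :: real
      using that by (simp add: field_simps)
    ultimately show ?case using Suc.IH unfolding limit_weight_Suc by simp
  qed simp
  thus ?thesis using qprod_pos[OF Q, of "e + 2 * s"] by (simp add: field_simps)
qed

lemma rank_count_step:
  assumes Q: "Q > 1"
  shows "rank_count Q (r + 2) j * (Q ^ j * (Q ^ (r + 1) - 1) * (Q ^ (r + 2) - 1))
    = rank_count Q r (Suc j) * (Q ^ Suc j - 1)"
proof -
  have "qprod Q (r + 2) = qprod Q r * (Q ^ (r + 1) - 1) * (Q ^ (r + 2) - 1)"
    using qprod_Suc[of Q "Suc r"] qprod_Suc[of Q r] by simp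
  moreover have "r + 2 + 2 * j = r + 2 * Suc j" by simp
  moreover have "qprod Q r > 0" "qprod Q j > 0" using Q by (simp_all add: qprod_pos)
  moreover have "Q ^ (r + 1) - 1 > 0" "Q ^ (r + 2) - 1 > 0" "Q ^ Suc j - 1 > 0"
    by (rule power_minus_one_pos[OF Q], simp)+
  moreover have "(E * N / ((R * B1 * B2) * J)) * (A * B1 * B2) = ((E * A) * N / (R * (J * D))) * D"
    if "R > 0" "J > 0" "B1 > 0" "B2 > 0" "D > 0" for E N R J A B1 B2 D :: real
    using that by (simp add: field_simps)
  ultimately show ?thesis unfolding rank_count_def by (simp add: qprod_Suc[of Q j])
qed

lemma rank_count_shift:
  assumes Q: "Q > 1"
  shows "s \<le> M \<Longrightarrow> rank_count Q (e + 2 * s) (M - s) = rank_count Q e M * weight Q e M s"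
proof (induction s)
  case (Suc s)
  define j where "j = M - Suc s"
  have Ms: "M - s = Suc j" using Suc.prems unfolding j_def by simp
  have pos: "Q ^ (e + 2 * s + 1) - 1 > 0" "Q ^ (e + 2 * s + 2) - 1 > 0"
    by (rule power_minus_one_pos[OF Q], simp)+
  have "Q ^ j > 0" using Q by simp
  have step: "rank_count Q (e + 2 * s + 2) j * (Q ^ j * (Q ^ (e + 2 * s + 1) - 1) * (Q ^ (e + 2 * s + 2) - 1))
      = rank_count Q e M * weight Q e M s * (Q * Q ^ j - 1)"
    using rank_count_step[OF Q, of "e + 2 * s" j] Suc Ms by simp
  have cancel: "X = C * (Q / (B1 * B2)) * (1 - 1 / (Q * A))"
    if "X * (A * B1 * B2) = C * (Q * A - 1)" "A > 0" "B1 > 0" "B2 > 0" for A B1 B2 X C :: real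
  proof -
    have "X = C * (Q * A - 1) / (A * B1 * B2)" using that by (simp add: field_simps)
    moreover have "C * (Q / (B1 * B2)) * (1 - 1 / (Q * A)) = C * (Q * A - 1) / (A * B1 * B2)"
      using that Q by (simp add: field_simps)
    ultimately show ?thesis by simp
  qed
  have "rank_count Q (e + 2 * s + 2) j = rank_count Q e M * weight Q e M s
      * (Q / ((Q ^ (e + 2 * s + 1) - 1) * (Q ^ (e + 2 * s + 2) - 1))) * (1 - 1 / (Q * Q ^ j))"
    by (rule cancel[OF step \<open>Q ^ j > 0\<close> pos])
  moreover have "weight Q e M (Suc s) = weight Q e M s
      * (Q / ((Q ^ (e + 2 * s + 1) - 1) * (Q ^ (e + 2 * s + 2) - 1))) * (1 - 1 / (Q * Q ^ j))"
    unfolding weight_def limit_weight_Suc using Ms by simp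
  moreover have "e + 2 * Suc s = e + 2 * s + 2" "M - Suc s = j" unfolding j_def by simp_all
  ultimately show ?case by (simp add: mult.assoc)
qed (simp add: weight_def)

lemma real_card_square_zero_rank_weight:
  assumes "t \<le> M"
  shows "real (card (square_zero_rank (e + 2 * M) (M - t) :: 'a::{finite,field} mat set))
    = rank_count (real CARD('a)) e M * weight (real CARD('a)) e M t"
proof -
  have "e + 2 * t + 2 * (M - t) = e + 2 * M" using assms by simp
  thus ?thesis
    using real_card_square_zero_rank[where 'a='a, of "e + 2 * t" "M - t"]
      rank_count_shift[OF _ assms, of "real CARD('a)" e] card_field_ge_2[where 'a='a]
    by (simp only:)
qed

lemma p_prob_eq_weight:
  fixes T :: "'a::{finite,field} itself"
  assumes "e < 2" "s \<le> M"
  shows "p_prob T (e + 2 * s) (e + 2 * M)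
    = weight (real CARD('a)) e M s / (\<Sum>t\<le>M. weight (real CARD('a)) e M t)"
proof -
  let ?Q = "real CARD('a)"
  have "e + 2 * s + 2 * (M - s) = e + 2 * M" using assms by simp
  hence "real (c_r_count T (e + 2 * s) (e + 2 * M)) = rank_count ?Q e M * weight ?Q e M s"
    using c_r_count_eq_card_square_zero_rank[of T "e + 2 * s" "M - s"]
      real_card_square_zero_rank_weight[where 'a='a, OF assms(2), of e] by (simp only:)
  moreover have "real (c_count T (e + 2 * M))
      = (\<Sum>t\<le>M. real (card (square_zero_rank (e + 2 * M) (M - t) :: 'a mat set)))"
    using c_count_eq_sum_card_square_zero_rank[of T "e + 2 * M"] assms(1)
      sum.nat_diff_reindex[of "\<lambda>k. real (card (square_zero_rank (e + 2 * M) k :: 'a mat set))" "Suc M"]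
    by (simp add: lessThan_Suc_atMost)
  moreover have "\<dots> = rank_count ?Q e M * (\<Sum>t\<le>M. weight ?Q e M t)"
    by (simp add: real_card_square_zero_rank_weight sum_distrib_left)
  moreover have "rank_count ?Q e M > 0" using card_field_ge_2[where 'a='a] by (simp add: rank_count_pos)
  ultimately show ?thesis unfolding p_prob_def by simp
qed

lemma limit_weight_factor_le:
  fixes Q :: real
  assumes Q: "Q \<ge> 2"
  shows "Q / ((Q ^ (e + 2 * s + 1) - 1) * (Q ^ (e + 2 * s + 2) - 1)) \<le> 2 / 3"
proof -
  have "Q \<le> Q ^ (e + 2 * s + 1)" using power_increasing[of 1 "e + 2 * s + 1" Q] Q by simp
  hence A: "1 \<le> Q ^ (e + 2 * s + 1) - 1" using Q by linarith
  have "(Q - 2) * (2 * Q + 1) \<ge> 0" using Q by (intro mult_nonneg_nonneg) auto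
  hence "3 * Q \<le> 2 * (Q ^ 2 - 1)" by (simp add: power2_eq_square algebra_simps)
  also have "Q ^ 2 \<le> Q ^ (e + 2 * s + 2)" using power_increasing[of 2 "e + 2 * s + 2" Q] Q by simp
  hence "2 * (Q ^ 2 - 1) \<le> 2 * (Q ^ (e + 2 * s + 2) - 1)" by simp
  finally have B: "3 * Q \<le> 2 * (Q ^ (e + 2 * s + 2) - 1)" .
  have "Q / (x * y) \<le> 2 / 3" if "1 \<le> x" "3 * Q \<le> 2 * y" for x y :: real
  proof -
    have "0 < y" using that Q by linarith
    hence "y \<le> x * y" using mult_right_mono[OF that(1), of y] by simp
    hence "3 * Q \<le> 2 * (x * y)" using that by linarith
    moreover have "0 < x * y" using \<open>0 < y\<close> that by simp
    ultimately show ?thesis by (simp add: divide_le_eq)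
  qed
  thus ?thesis using A B .
qed

lemma summable_limit_weight:
  fixes Q :: real
  assumes Q: "Q \<ge> 2"
  shows "summable (limit_weight Q e)"
proof (rule summable_ratio_test[where c = "2/3" and N = 0])
  fix n :: nat
  have pos: "limit_weight Q e n > 0" "limit_weight Q e (Suc n) > 0" using limit_weight_pos Q by simp_all
  have "limit_weight Q e (Suc n) \<le> limit_weight Q e n * (2 / 3)"
    unfolding limit_weight_Suc using limit_weight_factor_le[OF Q, of e n] pos by (intro mult_left_mono) auto
  thus "norm (limit_weight Q e (Suc n)) \<le> 2 / 3 * norm (limit_weight Q e n)" using pos by simp
qed simp

lemma weight_bounds:
  fixes Q :: real
  assumes Q: "Q > 1"
  shows "0 \<le> weight Q e M s" "weight Q e M s \<le> limit_weight Q e s"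
proof -
  have "0 \<le> 1 - 1 / Q ^ k \<and> 1 - 1 / Q ^ k \<le> 1" for k
    using Q one_le_power[of Q k] by simp
  hence "0 \<le> (\<Prod>i<s. 1 - 1 / Q ^ (M - i))" "(\<Prod>i<s. 1 - 1 / Q ^ (M - i)) \<le> 1"
    by (auto intro: prod_nonneg prod_le_1)
  thus "0 \<le> weight Q e M s" "weight Q e M s \<le> limit_weight Q e s"
    unfolding weight_def using limit_weight_pos[OF Q, of e s] by (simp_all add: mult_left_le)
qed

lemma weight_eq_0: "M < s \<Longrightarrow> weight Q e M s = 0"
  unfolding weight_def by (subst prod_zero[of "{..<s}"]) (auto intro!: bexI[of _ M])

lemma weight_tendsto:
  fixes Q :: real
  assumes Q: "Q > 1"
  shows "(\<lambda>M. weight Q e M s) \<longlonglongrightarrow> limit_weight Q e s"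
proof -
  have "(\<lambda>M. (1 / Q) ^ (M - i)) \<longlonglongrightarrow> 0" for i
    using filterlim_compose[OF LIMSEQ_realpow_zero filterlim_minus_const_nat_at_top, of "1 / Q"] Q
    by (simp add: o_def)
  hence "(\<lambda>M. \<Prod>i<s. 1 - 1 / Q ^ (M - i)) \<longlonglongrightarrow> (\<Prod>i<s. 1 - 0)"
    by (intro tendsto_prod tendsto_diff) (simp_all add: power_one_over)
  thus ?thesis unfolding weight_def using tendsto_mult_left[of _ 1 _ "limit_weight Q e s"] by simp
qed

lemma sum_weight_tendsto:
  fixes Q :: real
  assumes Q: "Q \<ge> 2"
  shows "(\<lambda>M. \<Sum>t\<le>M. weight Q e M t) \<longlonglongrightarrow> (\<Sum>t. limit_weight Q e t)"
proof -
  have "(\<Sum>t\<le>M. weight Q e M t) = (\<Sum>t. weight Q e M t)" for M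
    by (rule suminf_finite[symmetric]) (auto intro: weight_eq_0)
  moreover have "((\<lambda>M. \<Sum>t. weight Q e M t) \<longlonglongrightarrow> (\<Sum>t. limit_weight Q e t))"
  proof (rule tannerys_theorem[THEN conjunct2, THEN conjunct2])
    show "\<And>t. (\<lambda>M. weight Q e M t) \<longlonglongrightarrow> limit_weight Q e t" using weight_tendsto Q by simp
    show "eventually (\<lambda>(t, M). norm (weight Q e M t) \<le> limit_weight Q e t) (at_top \<times>\<^sub>F sequentially)"
      using weight_bounds[of Q] Q by (intro always_eventually) auto
    show "summable (limit_weight Q e)" by (rule summable_limit_weight[OF Q])
  qed simp
  ultimately show ?thesis by simp
qed

lemma p_prob_tendsto:
  fixes T :: "'a::{finite,field} itself"
  defines "Q \<equiv> real CARD('a)"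
  shows "(\<lambda>m. p_prob T r (r + 2 * m))
    \<longlonglongrightarrow> limit_weight Q (r mod 2) (r div 2) / (\<Sum>t. limit_weight Q (r mod 2) t)"
proof -
  let ?e = "r mod 2" and ?s = "r div 2"
  have Q: "Q \<ge> 2" unfolding Q_def using card_field_ge_2[where 'a='a] by simp
  have "p_prob T r (r + 2 * m) = weight Q ?e (m + ?s) ?s / (\<Sum>t\<le>m + ?s. weight Q ?e (m + ?s) t)" for m
    using p_prob_eq_weight[of ?e ?s "m + ?s" T] unfolding Q_def by (simp add: algebra_simps)
  moreover have "(\<lambda>m. weight Q ?e (m + ?s) ?s) \<longlonglongrightarrow> limit_weight Q ?e ?s"
    using LIMSEQ_ignore_initial_segment[OF weight_tendsto] Q by simp
  moreover have "(\<lambda>m. \<Sum>t\<le>m + ?s. weight Q ?e (m + ?s) t) \<longlonglongrightarrow> (\<Sum>t. limit_weight Q ?e t)"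
    using LIMSEQ_ignore_initial_segment[OF sum_weight_tendsto[OF Q]] by simp
  moreover have "(\<Sum>t. limit_weight Q ?e t) \<noteq> 0"
    using summable_limit_weight[OF Q] limit_weight_pos Q by (intro suminf_pos[THEN less_imp_neq, symmetric]) auto
  ultimately show ?thesis by (simp add: tendsto_divide)
qed

lemma limit_weight_lt_suminf:
  fixes Q :: real
  assumes Q: "Q \<ge> 2"
  shows "limit_weight Q e s < (\<Sum>t. limit_weight Q e t)"
proof -
  have "(\<Sum>t\<in>{s, Suc s}. limit_weight Q e t) \<le> (\<Sum>t. limit_weight Q e t)"
    using summable_limit_weight[OF Q] limit_weight_pos[of Q] Q
    by (intro sum_le_suminf) (auto intro: less_imp_le)
  thus ?thesis using limit_weight_pos[of Q e "Suc s"] Q by simp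
qed

lemma limit_weight_tail_sums:
  fixes Q :: real
  assumes Q: "Q \<ge> 2"
  shows "(\<lambda>k. Q ^ (k + 1) / qprod Q (e + 2 * (k + 1)))
    sums (((\<Sum>t. limit_weight Q e t) - 1) / qprod Q e)"
proof -
  have "(\<lambda>k. limit_weight Q e (Suc k) / qprod Q e) sums (((\<Sum>t. limit_weight Q e t) - 1) / qprod Q e)"
    using summable_limit_weight[OF Q, of e] by (intro sums_divide) (simp add: sums_Suc_iff summable_sums)
  moreover have "limit_weight Q e (Suc k) / qprod Q e = Q ^ (k + 1) / qprod Q (e + 2 * (k + 1))" for k
    using limit_weight_eq[of Q e "Suc k"] qprod_pos[of Q e] Q by simp
  ultimately show ?thesis by simp
qed

lemma limit_weight_ratio_bounds:
  fixes Q :: real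
  assumes Q: "Q \<ge> 2"
  shows "0 < limit_weight Q e s / (\<Sum>t. limit_weight Q e t)"
    "limit_weight Q e s / (\<Sum>t. limit_weight Q e t) < 1"
proof -
  have "0 < limit_weight Q e s" "limit_weight Q e s < (\<Sum>t. limit_weight Q e t)"
    using limit_weight_pos[of Q e s] limit_weight_lt_suminf[OF Q] Q by simp_all
  thus "0 < limit_weight Q e s / (\<Sum>t. limit_weight Q e t)"
    "limit_weight Q e s / (\<Sum>t. limit_weight Q e t) < 1" by simp_all
qed

lemma limit_weight_even:
  assumes "Q > 1" "even r"
  shows "limit_weight Q 0 (r div 2) = Q ^ (r div 2) / (\<Prod>j=1..r. Q ^ j - 1)"
  using limit_weight_eq[OF assms(1), of 0 "r div 2"] assms(2) by (simp add: qprod_def)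

lemma limit_weight_odd:
  assumes "Q > 1" "odd r"
  shows "limit_weight Q 1 (r div 2) = (Q - 1) * Q ^ ((r - 1) div 2) / (\<Prod>j=1..r. Q ^ j - 1)"
proof -
  have "1 + 2 * (r div 2) = r" "(r - 1) div 2 = r div 2" using assms(2) by (auto elim: oddE)
  thus ?thesis using limit_weight_eq[OF assms(1), of 1 "r div 2"] by (simp add: qprod_def mult.commute)
qed

lemma even_tail_sums:
  fixes Q :: real
  assumes "Q \<ge> 2"
  shows "(\<lambda>k. Q ^ (k + 1) / (\<Prod>j=1..2*(k+1). Q ^ j - 1)) sums ((\<Sum>t. limit_weight Q 0 t) - 1)"
  using limit_weight_tail_sums[OF assms, of 0] unfolding qprod_def by simp

lemma odd_tail_sums:
  fixes Q :: real
  assumes "Q \<ge> 2"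
  shows "(\<lambda>k. Q ^ (k + 1) / (\<Prod>j=1..2*(k+1)+1. Q ^ j - 1))
    sums (((\<Sum>t. limit_weight Q 1 t) - 1) / (Q - 1))"
  using limit_weight_tail_sums[OF assms, of 1] unfolding qprod_def by (simp add: add.commute)

theorem theorem1:
  fixes T :: "'a::{finite,field} itself"
  defines "q \<equiv> real CARD('a)"
  defines "plim \<equiv> \<lambda>r::nat. lim (\<lambda>m::nat. p_prob T r (r + 2 * m))"
  shows "(\<forall>r::nat. convergent (\<lambda>m::nat. p_prob T r (r + 2 * m)) \<and> 0 < plim r \<and> plim r < 1)
    \<and> (\<forall>r::nat. even r \<and> r \<ge> 2 \<longrightarrow>
          plim r / plim 0 = q ^ (r div 2) / (\<Prod>j=1..r. q ^ j - 1))
    \<and> summable (\<lambda>k. q ^ (k + 1) / (\<Prod>j=1..2*(k+1). q ^ j - 1))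
    \<and> plim 0 = 1 / (1 + (\<Sum>k. q ^ (k + 1) / (\<Prod>j=1..2*(k+1). q ^ j - 1)))
    \<and> (\<forall>r::nat. odd r \<and> r \<ge> 3 \<longrightarrow>
          plim r / plim 1 = (q - 1) * q ^ ((r - 1) div 2) / (\<Prod>j=1..r. q ^ j - 1))
    \<and> summable (\<lambda>k. q ^ (k + 1) / (\<Prod>j=1..2*(k+1)+1. q ^ j - 1))
    \<and> plim 1 = 1 / (1 + (q - 1) * (\<Sum>k. q ^ (k + 1) / (\<Prod>j=1..2*(k+1)+1. q ^ j - 1)))"
proof -
  have q: "q \<ge> 2" unfolding q_def using card_field_ge_2[where 'a='a] by simp
  let ?S = "\<lambda>e. \<Sum>t. limit_weight q e t"
  have lim: "(\<lambda>m. p_prob T r (r + 2 * m)) \<longlonglongrightarrow> limit_weight q (r mod 2) (r div 2) / ?S (r mod 2)" for r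
    using p_prob_tendsto[of T r] unfolding q_def .
  hence plim: "plim r = limit_weight q (r mod 2) (r div 2) / ?S (r mod 2)" for r
    unfolding plim_def by (rule limI)
  have "?S e \<noteq> 0" for e using limit_weight_lt_suminf[OF q, of e 0] by simp
  hence ratio: "plim r / plim (r mod 2) = limit_weight q (r mod 2) (r div 2)" for r
    using plim[of r] plim[of "r mod 2"] by simp
  have "convergent (\<lambda>m. p_prob T r (r + 2 * m)) \<and> 0 < plim r \<and> plim r < 1" for r
    using lim[of r] limit_weight_ratio_bounds[OF q] unfolding plim by (auto intro: convergentI)
  moreover have "plim r / plim 0 = q ^ (r div 2) / (\<Prod>j=1..r. q ^ j - 1)" if "even r" for r
    using ratio[of r] limit_weight_even[of q r] that q by simp
  moreover have "plim r / plim 1 = (q - 1) * q ^ ((r - 1) div 2) / (\<Prod>j=1..r. q ^ j - 1)" if "odd r" for r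
    using ratio[of r] limit_weight_odd[of q r] that q by (simp add: odd_iff_mod_2_eq_one)
  moreover have "plim 0 = 1 / (1 + (\<Sum>k. q ^ (k + 1) / (\<Prod>j=1..2*(k+1). q ^ j - 1)))"
    using plim[of 0] sums_unique[OF even_tail_sums[OF q]] by simp
  moreover have "plim 1 = 1 / (1 + (q - 1) * (\<Sum>k. q ^ (k + 1) / (\<Prod>j=1..2*(k+1)+1. q ^ j - 1)))"
    using plim[of 1] sums_unique[OF odd_tail_sums[OF q], symmetric] q by simp
  ultimately show ?thesis
    using sums_summable[OF even_tail_sums[OF q]] sums_summable[OF odd_tail_sums[OF q]] by blast
qed

end
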